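(* Let $k/\mathbb{Q}$ be a finite extension and $\Lambda$ a finitely generated subgroup of $\mathrm{GL}(n;k)$, and let $\Gamma$ be a unipotent subgroup of $\Lambda$. Then there exists a torsion-free finite index subgroup $\Lambda_0$ of $\Lambda$ with $\Gamma\subseteq\Lambda_0$.
   Context: A subgroup is unipotent if it is conjugate in $\mathrm{GL}(n;\mathbb{C})$ into the group of upper triangular matrices with all diagonal entries equal to 1. *)

theory Defs
  imports "HOL-Analysis.Analysis" "HOL-Algebra.Algebra"
begin

definition GLC :: "(complex^'n^'n) monoid" where
  "GLC = \<lparr>carrier = {A. invertible A}, mult = (**), one = mat 1\<rparr>"

definition rat_span :: "complex set \<Rightarrow> complex set" where
  "rat_span B = {(\<Sum>b\<in>B. of_rat (c b) * b) | c. True}"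

text \<open>A number field, realised as a subfield of C (every finite extension of Q
  embeds in C) which is finite-dimensional as a Q-vector space.\<close>
definition number_field :: "complex set \<Rightarrow> bool" where
  "number_field K \<longleftrightarrow>
     0 \<in> K \<and> 1 \<in> K \<and>
     (\<forall>x\<in>K. \<forall>y\<in>K. x + y \<in> K \<and> x * y \<in> K \<and> - x \<in> K) \<and>
     (\<forall>x\<in>K. x \<noteq> 0 \<longrightarrow> inverse x \<in> K) \<and>
     (\<exists>B. finite B \<and> B \<subseteq> K \<and> K = rat_span B)"

definition entries_in :: "complex set \<Rightarrow> complex^'n^'n \<Rightarrow> bool" where
  "entries_in K A \<longleftrightarrow> (\<forall>i j. A $ i $ j \<in> K)"

definition upper_unitriangular :: "((complex, 'n::{finite,linorder}) vec, 'n) vec \<Rightarrow> bool" where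
  "upper_unitriangular A \<longleftrightarrow>
     (\<forall>i j. j < i \<longrightarrow> A $ i $ j = 0) \<and> (\<forall>i. A $ i $ i = 1)"

definition unipotent_subgroup :: "(((complex, 'n::{finite,linorder}) vec, 'n) vec) set \<Rightarrow> bool" where
  "unipotent_subgroup G \<longleftrightarrow> subgroup G GLC \<and>
     (\<exists>P::((complex, 'n) vec, 'n) vec. invertible P \<and> (\<forall>A\<in>G. upper_unitriangular (matrix_inv P ** A ** P)))"

definition torsion_free :: "(complex^'n^'n) set \<Rightarrow> bool" where
  "torsion_free H \<longleftrightarrow>
     (\<forall>g\<in>H. \<forall>m::nat. m > 0 \<longrightarrow> g [^]\<^bsub>GLC\<^esub> m = \<one>\<^bsub>GLC\<^esub> \<longrightarrow> g = \<one>\<^bsub>GLC\<^esub>)"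

end

theory Submission
  imports Defs "HOL-Number_Theory.Cong"
begin

(* Choose a Q-basis B of K and a prime p so large that 1, the products of basis elements and the
   entries of the generators of Lambda and of their inverses are p-integral combinations of B.
   Then Lambda lies in the ring R of matrices with entries in the Z_(p)-span of B, and the set of
   g in Lambda that are congruent modulo p to some element of Gamma is a subgroup containing Gamma;
   it has finite index because R/pR is finite. If such a g has finite order and g = c mod p with
   c unipotent, then g^(p^n) = c^(p^n) = 1 mod p, and since the principal congruence subgroup of
   level p > 2 is torsion-free (Minkowski), g^(p^n) = 1. One prime is not enough, since g may have
   order p; doing the same for a second prime q and intersecting, a torsion element satisfies
   g^(p^n) = g^(q^n) = 1, hence g = 1. *)

hide_const (open) Divisibility.prime

lemma binomial_ring_one_plus:
  fixes x :: "'a::ring_1"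
  shows "(1 + x) ^ m = (\<Sum>j\<le>m. of_nat (m choose j) * x ^ j)"
proof (induction m)
  case 0
  then show ?case by simp
next
  case (Suc m)
  let ?S = "\<lambda>m. \<Sum>j\<le>m. of_nat (m choose j) * x ^ j"
  have "(\<Sum>j\<le>m. of_nat (m choose Suc j) * x ^ Suc j) = (\<Sum>j<m. of_nat (m choose Suc j) * x ^ Suc j)"
    by (simp add: lessThan_Suc_atMost[symmetric] binomial_eq_0)
  then have shift: "?S m = 1 + (\<Sum>j\<le>m. of_nat (m choose Suc j) * x ^ Suc j)"
    by (simp add: sum.atMost_shift)
  have "(1 + x) ^ Suc m = ?S m * (1 + x)"
    using Suc by (simp add: power_Suc2 del: power_Suc)
  also have "\<dots> = ?S m + (\<Sum>j\<le>m. of_nat (m choose j) * x ^ Suc j)"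
    by (simp add: distrib_left sum_distrib_right mult.assoc power_Suc2 power_commutes)
  also have "\<dots> = 1 + (\<Sum>j\<le>m. of_nat (Suc m choose Suc j) * x ^ Suc j)"
    by (simp add: shift sum.distrib[symmetric] distrib_right add_ac)
  also have "\<dots> = ?S (Suc m)"
    by (simp only: sum.atMost_Suc_shift) simp
  finally show ?case .
qed

lemma binomial_ring_one_plus_tail:
  fixes x :: "'a::ring_1"
  assumes "q \<ge> 2"
  shows "(1 + x) ^ q - 1 - of_nat q * x = (\<Sum>j\<in>{2..q}. of_nat (q choose j) * x ^ j)"
proof -
  have "{..q} = insert 0 (insert 1 {2..q})" using assms by auto
  then show ?thesis by (simp add: binomial_ring_one_plus)
qed

lemma power_conjugate:
  fixes M P P' :: "'a::monoid_mult"
  assumes "P' * P = 1" "P * P' = 1"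
  shows "(P * M * P') ^ m = P * M ^ m * P'"
proof (induction m)
  case 0
  then show ?case using assms(2) by simp
next
  case (Suc m)
  have "(P * M * P') ^ Suc m = P * M * P' * (P * M ^ m * P')"
    by (simp add: Suc)
  also have "\<dots> = P * M * (P' * P) * M ^ m * P'"
    by (simp add: mult.assoc)
  finally show ?case using assms(1) by (simp add: mult.assoc)
qed

lemma power_eq_one_coprime:
  fixes x :: "'a::monoid_mult"
  assumes "x ^ a = 1" "x ^ b = 1" "coprime a b"
  shows "x = 1"
proof (cases "a = 0")
  case True
  then show ?thesis using assms(2,3) by simp
next
  case False
  then obtain u v where "a * u = b * v + 1" using bezout_nat[of a b] assms(3) by auto
  then have "x ^ (a * u) = x" using assms(2) by (simp add: power_add power_mult)
  moreover have "x ^ (a * u) = 1" using assms(1) by (simp add: power_mult)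
  ultimately show ?thesis by simp
qed

lemma (in group) finite_rcosets_by_classifier:
  assumes H: "subgroup H G" and fin: "finite (f ` carrier G)"
    and sep: "\<And>a b. a \<in> carrier G \<Longrightarrow> b \<in> carrier G \<Longrightarrow> f a = f b \<Longrightarrow> a \<otimes> inv b \<in> H"
  shows "finite (rcosets H)"
proof -
  have same_coset: "H #> a = H #> b" if ab: "a \<in> carrier G" "b \<in> carrier G" "f a = f b" for a b
  proof -
    have "a = (a \<otimes> inv b) \<otimes> b" using ab by (simp add: m_assoc)
    then have "a \<in> H #> b" using sep[OF ab] unfolding r_coset_def by blast
    then show ?thesis using repr_independence[OF _ ab(2) H] by simp
  qed
  define rep where "rep k = (SOME a. a \<in> carrier G \<and> f a = k)" for k
  have "rcosets H \<subseteq> (\<lambda>k. H #> rep k) ` f ` carrier G"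
  proof
    fix C assume "C \<in> rcosets H"
    then obtain a where a: "a \<in> carrier G" "C = H #> a" unfolding RCOSETS_def by auto
    have "rep (f a) \<in> carrier G \<and> f (rep (f a)) = f a"
      unfolding rep_def by (rule someI[of _ a]) (use a in simp)
    then have "C = H #> rep (f a)" using a same_coset[of a "rep (f a)"] by simp
    then show "C \<in> (\<lambda>k. H #> rep k) ` f ` carrier G" using a by blast
  qed
  then show ?thesis using fin by (meson finite_imageI finite_subset)
qed

section \<open>Orders with a p-adic filtration\<close>

text \<open>The model is the ring of n\<times>n matrices over the localisation at p of a Z-lattice in a
  number field; \<open>multiples k\<close> is the ideal p^k R.\<close>

locale p_adic_order =
  fixes R :: "'a::ring_1 set" and p :: nat
  assumes prime_p: "prime p"
    and p_gt_2: "p > 2"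
    and one_mem: "1 \<in> R"
    and add_mem: "x \<in> R \<Longrightarrow> y \<in> R \<Longrightarrow> x + y \<in> R"
    and uminus_mem: "x \<in> R \<Longrightarrow> - x \<in> R"
    and mult_mem: "x \<in> R \<Longrightarrow> y \<in> R \<Longrightarrow> x * y \<in> R"
    and coprime_inverse_mem: "coprime c p \<Longrightarrow> \<exists>u\<in>R. u * of_nat c = 1"
    and p_torsion_free: "of_nat p * x = 0 \<Longrightarrow> x = 0"
    and separated: "x \<in> R \<Longrightarrow> x \<noteq> 0 \<Longrightarrow> \<exists>k. \<forall>y\<in>R. x \<noteq> of_nat p ^ k * y"
begin

definition multiples :: "nat \<Rightarrow> 'a set" where
  "multiples k = {of_nat p ^ k * y | y. y \<in> R}"

lemma zero_mem: "0 \<in> R"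
  using add_mem[OF one_mem uminus_mem[OF one_mem]] by simp

lemma diff_mem: "x \<in> R \<Longrightarrow> y \<in> R \<Longrightarrow> x - y \<in> R"
  using add_mem uminus_mem by (metis diff_conv_add_uminus)

lemma of_nat_mem: "of_nat c \<in> R"
  by (induction c) (simp_all add: zero_mem add_mem one_mem)

lemma power_mem: "x \<in> R \<Longrightarrow> x ^ m \<in> R"
  by (induction m) (simp_all add: one_mem mult_mem)

lemma p_power_commute: "of_nat p ^ k * x = x * of_nat p ^ k"
  by (metis mult_of_nat_commute of_nat_power)

lemma multiples_0 [simp]: "multiples 0 = R"
  by (simp add: multiples_def)

lemma multiplesI: "y \<in> R \<Longrightarrow> of_nat p ^ k * y \<in> multiples k"
  by (auto simp: multiples_def)

lemma multiplesE:
  assumes "x \<in> multiples k"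
  obtains y where "y \<in> R" "x = of_nat p ^ k * y"
  using assms by (auto simp: multiples_def)

lemma multiples_subset: "multiples k \<subseteq> R"
  using mult_mem[OF power_mem[OF of_nat_mem]] by (auto simp: multiples_def)

lemma multiples_antimono: "l \<le> k \<Longrightarrow> multiples k \<subseteq> multiples l"
proof
  fix x assume "l \<le> k" "x \<in> multiples k"
  then obtain y where "y \<in> R" "x = of_nat p ^ l * (of_nat p ^ (k - l) * y)"
    by (auto elim!: multiplesE simp: mult.assoc[symmetric] power_add[symmetric])
  then show "x \<in> multiples l"
    using mult_mem[OF power_mem[OF of_nat_mem]] by (simp add: multiplesI)
qed

lemma multiples_add: "x \<in> multiples k \<Longrightarrow> y \<in> multiples k \<Longrightarrow> x + y \<in> multiples k"
  by (auto elim!: multiplesE simp: distrib_left[symmetric] intro!: multiplesI add_mem)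

lemma multiples_uminus: "x \<in> multiples k \<Longrightarrow> - x \<in> multiples k"
  using multiplesI uminus_mem by (auto elim!: multiplesE) (metis mult_minus_right)

lemma multiples_diff: "x \<in> multiples k \<Longrightarrow> y \<in> multiples k \<Longrightarrow> x - y \<in> multiples k"
  using multiples_add multiples_uminus by (metis diff_conv_add_uminus)

lemma zero_in_multiples: "0 \<in> multiples k"
  using multiplesI[OF zero_mem] by simp

lemma multiples_sum: "(\<And>i. i \<in> I \<Longrightarrow> f i \<in> multiples k) \<Longrightarrow> sum f I \<in> multiples k"
  by (induction I rule: infinite_finite_induct) (simp_all add: zero_in_multiples multiples_add)

lemma multiples_mult:
  assumes "x \<in> multiples k" "y \<in> multiples l"
  shows "x * y \<in> multiples (k + l)"
proof -
  obtain x' y' where "x' \<in> R" "y' \<in> R" "x = of_nat p ^ k * x'" "y = of_nat p ^ l * y'"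
    using assms by (auto elim!: multiplesE)
  moreover have "x' * (of_nat p ^ l * y') = of_nat p ^ l * (x' * y')"
    by (metis mult.assoc p_power_commute)
  then have "of_nat p ^ k * x' * (of_nat p ^ l * y') = of_nat p ^ (k + l) * (x' * y')"
    by (simp add: power_add mult.assoc)
  ultimately show ?thesis by (simp add: multiplesI mult_mem)
qed

lemma of_nat_mult_multiples: "x \<in> multiples k \<Longrightarrow> of_nat c * x \<in> multiples k"
  using multiples_mult[of "of_nat c" 0 x k] by (simp add: of_nat_mem)

lemma p_power_mult_multiples_iff: "of_nat p ^ j * x \<in> multiples (k + j) \<longleftrightarrow> x \<in> multiples k"
proof
  assume "of_nat p ^ j * x \<in> multiples (k + j)"
  then obtain y where y: "y \<in> R" "of_nat p ^ j * x = of_nat p ^ j * (of_nat p ^ k * y)"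
    by (auto elim!: multiplesE simp: power_add mult.assoc p_power_commute[of k])
  have cancel: "of_nat p ^ j * z = 0 \<Longrightarrow> z = 0" for z :: 'a
    by (induction j arbitrary: z) (auto simp: mult.assoc dest: p_torsion_free)
  have "of_nat p ^ j * (x - of_nat p ^ k * y) = 0"
    using y(2) by (simp add: right_diff_distrib)
  then have "x = of_nat p ^ k * y" using cancel by fastforce
  then show "x \<in> multiples k" using y(1) by (simp add: multiplesI)
next
  assume "x \<in> multiples k"
  then obtain y where "y \<in> R" "x = of_nat p ^ k * y" by (auto elim: multiplesE)
  moreover have "of_nat p ^ j * (of_nat p ^ k * y) = of_nat p ^ (k + j) * y"
    by (simp add: mult.assoc[symmetric] power_add[symmetric] add.commute)
  ultimately show "of_nat p ^ j * x \<in> multiples (k + j)" by (simp add: multiplesI)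
qed

lemma coprime_mult_multiples:
  assumes "coprime c p" "of_nat c * x \<in> multiples k"
  shows "x \<in> multiples k"
proof -
  obtain u where u: "u \<in> R" "u * of_nat c = 1" using coprime_inverse_mem assms(1) by blast
  obtain y where y: "y \<in> R" "of_nat c * x = of_nat p ^ k * y" using assms(2) by (auto elim: multiplesE)
  have "x = u * (of_nat c * x)" by (simp add: mult.assoc[symmetric] u(2))
  also have "\<dots> = of_nat p ^ k * (u * y)"
    by (simp add: y(2) mult.assoc[symmetric] p_power_commute[of k u])
  finally show ?thesis using u(1) y(1) by (simp add: multiplesI mult_mem)
qed

lemma power_multiples: "x \<in> multiples k \<Longrightarrow> x ^ m \<in> multiples (k * m)"
  by (induction m) (simp_all add: one_mem multiples_mult)

lemma exact_multiple:
  assumes "x \<in> multiples 1" "x \<noteq> 0"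
  obtains k y where "k \<ge> 1" "y \<in> R" "y \<notin> multiples 1" "x = of_nat p ^ k * y"
proof -
  obtain k0 where "x \<notin> multiples k0"
    using separated assms multiples_subset unfolding multiples_def by blast
  then have "{k. x \<in> multiples k} \<subseteq> {..<k0}"
    using multiples_antimono[of k0] not_less by blast
  then have fin: "finite {k. x \<in> multiples k}" by (rule finite_subset) simp
  define k where "k = Max {k. x \<in> multiples k}"
  have "x \<in> multiples k" "k \<ge> 1"
    using Max_in[OF fin] Max_ge[OF fin] assms(1) unfolding k_def by auto
  then obtain y where y: "y \<in> R" "x = of_nat p ^ k * y" by (auto elim: multiplesE)
  have "y \<notin> multiples 1"
  proof
    assume "y \<in> multiples 1"
    then have "x \<in> multiples (1 + k)" using y(2) p_power_mult_multiples_iff by blast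
    then show False using Max_ge[OF fin, of "1 + k"] unfolding k_def by simp
  qed
  then show ?thesis using that \<open>k \<ge> 1\<close> y by blast
qed

lemma power_diff_multiples:
  assumes "g \<in> R" "h \<in> R" "g - h \<in> multiples k"
  shows "g ^ m - h ^ m \<in> multiples k"
proof (induction m)
  case 0
  then show ?case by (simp add: zero_in_multiples)
next
  case (Suc m)
  have "g ^ Suc m - h ^ Suc m = g ^ m * (g - h) + (g ^ m - h ^ m) * h"
    by (simp add: algebra_simps power_Suc2 del: power_Suc)
  moreover have "g ^ m * (g - h) \<in> multiples k"
    using multiples_mult[of "g ^ m" 0 "g - h" k] assms power_mem by simp
  moreover have "(g ^ m - h ^ m) * h \<in> multiples k"
    using multiples_mult[of _ k h 0] Suc assms by simp
  ultimately show ?case by (simp add: multiples_add)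
qed

lemma mult_diff_multiples:
  assumes "a \<in> R" "d \<in> R" "a - c \<in> multiples k" "b - d \<in> multiples k"
  shows "a * b - c * d \<in> multiples k"
proof -
  have "a * b - c * d = a * (b - d) + (a - c) * d" by (simp add: algebra_simps)
  moreover have "a * (b - d) \<in> multiples k" using multiples_mult[of a 0 "b - d" k] assms by simp
  moreover have "(a - c) * d \<in> multiples k" using multiples_mult[of "a - c" k d 0] assms by simp
  ultimately show ?thesis by (simp add: multiples_add)
qed

lemma inverse_diff_multiples:
  assumes "a' \<in> R" "c' \<in> R" "a' * a = 1" "c * c' = 1" "a - c \<in> multiples k"
  shows "a' - c' \<in> multiples k"
proof -
  have "a' * (c - a) * c' = a' * (c * c') - (a' * a) * c'" by (simp add: algebra_simps)
  then have "a' - c' = a' * (c - a) * c'" using assms(3,4) by simp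
  moreover have "c - a \<in> multiples k" using multiples_uminus[OF assms(5)] by simp
  ultimately show ?thesis
    using multiples_mult[OF multiples_mult[of a' 0 "c - a" k] , of c' 0] assms(1,2) by simp
qed

lemma binomial_tail_multiples:
  assumes "x \<in> multiples k" "q \<ge> 2"
  shows "(1 + x) ^ q - 1 - of_nat q * x \<in> multiples (k + k)"
  unfolding binomial_ring_one_plus_tail[OF assms(2)]
proof (rule multiples_sum)
  fix j assume "j \<in> {2..q}"
  then have "k + k \<le> k * j" using mult_le_mono2[of 2 j k] by (simp add: mult_2_right)
  then have "x ^ j \<in> multiples (k + k)"
    using power_multiples[OF assms(1), of j] multiples_antimono by blast
  then show "of_nat (q choose j) * x ^ j \<in> multiples (k + k)" by (rule of_nat_mult_multiples)
qed

lemma binomial_tail_p_multiples: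
  assumes "x \<in> multiples k" "k \<ge> 1"
  shows "(1 + x) ^ p - 1 - of_nat p * x \<in> multiples (k + 2)"
  unfolding binomial_ring_one_plus_tail[OF less_imp_le[OF p_gt_2]]
proof (rule multiples_sum)
  fix j assume j: "j \<in> {2..p}"
  have xj: "x ^ j \<in> multiples l" if "l \<le> k * j" for l
    using power_multiples[OF assms(1), of j] multiples_antimono[OF that] by blast
  show "of_nat (p choose j) * x ^ j \<in> multiples (k + 2)"
  proof (cases "j = p")
    case True
    then have "k * 3 \<le> k * j" using p_gt_2 by simp
    then have "x ^ j \<in> multiples (k + 2)" using assms(2) by (intro xj) linarith
    then show ?thesis by (rule of_nat_mult_multiples)
  next
    case False
    then have "p dvd (p choose j)" using j prime_p by (intro dvd_choose_prime) auto
    then obtain c where c: "p choose j = p * c" by blast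
    have "k * 2 \<le> k * j" using j by simp
    then have "x ^ j \<in> multiples (k + 1)" using assms(2) by (intro xj) linarith
    then have "of_nat p ^ 1 * x ^ j \<in> multiples (k + 2)"
      using p_power_mult_multiples_iff[of 1 "x ^ j" "k + 1"] by simp
    then have "of_nat c * (of_nat p * x ^ j) \<in> multiples (k + 2)"
      by (simp add: of_nat_mult_multiples)
    then show ?thesis by (simp add: c mult.assoc[symmetric] mult.commute)
  qed
qed

text \<open>Write h = 1 + p^k y with y \<notin> pR. In (1 + p^k y)^q = 1 every binomial term beyond the
  linear one is divisible by p^(k+2) if q = p (here p > 2 is needed) and by p^(2k) otherwise;
  in both cases the linear term q p^k y forces y \<in> pR.\<close>

lemma congruent_one_prime_order:
  assumes h: "h \<in> R" "h - 1 \<in> multiples 1" and q: "prime q" and hq: "h ^ q = 1"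
  shows "h = 1"
proof (rule ccontr)
  assume "h \<noteq> 1"
  then obtain k y where k: "k \<ge> 1" and y: "y \<in> R" "y \<notin> multiples 1"
    and hy: "h - 1 = of_nat p ^ k * y"
    using exact_multiple[OF h(2)] by auto
  define x where "x = h - 1"
  have x: "x \<in> multiples k" using hy y by (simp add: x_def multiplesI)
  have tail: "(1 + x) ^ q - 1 - of_nat q * x = - (of_nat q * x)" using hq by (simp add: x_def)
  show False
  proof (cases "q = p")
    case True
    then have "- (of_nat p * x) \<in> multiples (k + 2)"
      using binomial_tail_p_multiples[OF x k] tail by simp
    from multiples_uminus[OF this] have "of_nat p * x \<in> multiples (k + 2)" by simp
    then have "of_nat p ^ (k + 1) * y \<in> multiples (1 + (k + 1))"
      using hy by (simp add: x_def mult.assoc[symmetric] power_add)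
    then show False using y(2) p_power_mult_multiples_iff[of "k + 1" y 1] by simp
  next
    case False
    have "- (of_nat q * x) \<in> multiples (k + k)"
      using binomial_tail_multiples[OF x prime_ge_2_nat[OF q]] tail by simp
    from multiples_uminus[OF this] have "of_nat q * x \<in> multiples (k + k)" by simp
    then have "of_nat p ^ k * (of_nat q * y) \<in> multiples (k + k)"
      by (simp add: x_def hy mult.assoc[symmetric] p_power_commute[of k "of_nat q"])
    then have "of_nat q * y \<in> multiples k"
      using p_power_mult_multiples_iff[of k "of_nat q * y" k] by blast
    then have "y \<in> multiples k"
      by (rule coprime_mult_multiples[rotated]) (use False q prime_p in \<open>simp add: primes_coprime\<close>)
    then show False using y(2) multiples_antimono[OF k] by blast
  qed
qed

lemma congruent_one_torsion_free:
  assumes "h \<in> R" "h - 1 \<in> multiples 1" "h ^ m = 1" "m > 0"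
  shows "h = 1"
  using assms
proof (induction m arbitrary: h rule: less_induct)
  case (less m)
  show ?case
  proof (cases "m = 1")
    case True
    then show ?thesis using less.prems by simp
  next
    case False
    then obtain q m' where q: "prime q" and m: "m = q * m'"
      using prime_factor_nat[of m] by (auto elim!: dvdE)
    then have "m' > 0" using less.prems(4) by (simp add: gr0I)
    then have "m' < m" using mult_less_mono1[OF prime_gt_1_nat[OF q]] m by simp
    have "h ^ m' - 1 ^ m' \<in> multiples 1"
      using less.prems by (intro power_diff_multiples) (simp_all add: one_mem)
    moreover have "(h ^ m') ^ q = 1"
      using less.prems(3) m by (simp add: power_mult[symmetric] mult.commute)
    ultimately have "h ^ m' = 1"
      using congruent_one_prime_order[OF power_mem[OF less.prems(1)] _ q] by simp
    then show ?thesis using less.IH[OF \<open>m' < m\<close> less.prems(1,2) _ \<open>m' > 0\<close>] by simp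
  qed
qed

lemma freshmans_dream_multiples:
  assumes "N \<in> R"
  shows "(1 + N) ^ p - (1 + N ^ p) \<in> multiples 1"
proof -
  have "{..p} = insert 0 (insert p {1..<p})" using p_gt_2 by auto
  then have "(1 + N) ^ p - (1 + N ^ p) = (\<Sum>j\<in>{1..<p}. of_nat (p choose j) * N ^ j)"
    using binomial_ring_one_plus[of N p] p_gt_2 by (simp add: algebra_simps)
  also have "\<dots> \<in> multiples 1"
  proof (rule multiples_sum)
    fix j assume j: "j \<in> {1..<p}"
    then have "p dvd (p choose j)" using prime_p by (intro dvd_choose_prime) auto
    then obtain c where c: "p choose j = p * c" by blast
    have "of_nat p * N ^ j \<in> multiples 1"
      using p_power_mult_multiples_iff[of 1 "N ^ j" 0] power_mem[OF assms] by simp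
    then have "of_nat c * (of_nat p * N ^ j) \<in> multiples 1"
      by (simp add: of_nat_mult_multiples)
    then show "of_nat (p choose j) * N ^ j \<in> multiples 1"
      by (simp add: c mult.assoc[symmetric] mult.commute)
  qed
  finally show ?thesis .
qed

lemma freshmans_dream_p_power_multiples:
  assumes "N \<in> R"
  shows "(1 + N) ^ (p ^ a) - (1 + N ^ (p ^ a)) \<in> multiples 1"
proof (induction a)
  case 0
  then show ?case by (simp add: zero_in_multiples)
next
  case (Suc a)
  define M where "M = (1 + N) ^ (p ^ a) - 1"
  have M: "M \<in> R" unfolding M_def using assms by (intro diff_mem power_mem add_mem one_mem)
  have "M - N ^ (p ^ a) \<in> multiples 1" using Suc by (simp add: M_def algebra_simps)
  then have "M ^ p - (N ^ (p ^ a)) ^ p \<in> multiples 1"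
    using M assms by (intro power_diff_multiples power_mem)
  then have "((1 + M) ^ p - (1 + M ^ p)) + (M ^ p - (N ^ (p ^ a)) ^ p) \<in> multiples 1"
    using freshmans_dream_multiples[OF M] by (intro multiples_add)
  moreover have "(1 + N) ^ (p ^ Suc a) = (1 + M) ^ p"
    by (simp add: M_def power_mult[symmetric] mult.commute)
  ultimately show ?case by (simp add: power_mult[symmetric] mult.commute diff_diff_add)
qed

lemma congruent_unipotent_torsion:
  assumes "g \<in> R" "c \<in> R" "g - c \<in> multiples 1" "(c - 1) ^ n = 0" "g ^ m = 1" "m > 0"
  shows "g ^ (p ^ n) = 1"
proof -
  have "n < 2 ^ n" by (rule less_exp)
  moreover have "(2::nat) ^ n \<le> p ^ n" using p_gt_2 by (simp add: power_mono)
  ultimately have "n \<le> p ^ n" by linarith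
  then have "(c - 1) ^ (p ^ n) = 0" using assms(4) by (metis le_add_diff_inverse power_add mult_zero_left)
  then have a: "c ^ (p ^ n) - 1 \<in> multiples 1"
    using freshmans_dream_p_power_multiples[of "c - 1" n] assms(2) by (simp add: diff_mem one_mem)
  have "g ^ (p ^ n) - c ^ (p ^ n) \<in> multiples 1"
    using assms(1-3) by (rule power_diff_multiples)
  from multiples_add[OF this a] have "g ^ (p ^ n) - 1 \<in> multiples 1" by simp
  moreover have "(g ^ (p ^ n)) ^ m = (g ^ m) ^ (p ^ n)"
    by (simp add: power_mult[symmetric] mult.commute)
  then have "(g ^ (p ^ n)) ^ m = 1" using assms(5) by simp
  ultimately show ?thesis
    using congruent_one_torsion_free[OF power_mem[OF assms(1)] _ _ assms(6)] by blast
qed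

end

section \<open>p-integral rationals and Z_(p)-spans\<close>

definition p_integral :: "nat \<Rightarrow> rat \<Rightarrow> bool" where
  "p_integral p r \<longleftrightarrow> (\<exists>a b. r = of_int a / of_int b \<and> \<not> int p dvd b)"

context
  fixes p :: nat
  assumes prime_p: "prime p"
begin

lemma p_integral_of_int: "p_integral p (of_int a)"
  unfolding p_integral_def
  by (rule exI[of _ a], rule exI[of _ 1]) (use prime_p in \<open>auto simp: prime_def\<close>)

lemma p_integral_add: "p_integral p r \<Longrightarrow> p_integral p s \<Longrightarrow> p_integral p (r + s)"
proof -
  assume "p_integral p r" "p_integral p s"
  then obtain a b c d where r: "r = of_int a / of_int b" "\<not> int p dvd b"
    and s: "s = of_int c / of_int d" "\<not> int p dvd d" unfolding p_integral_def by blast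
  have "b \<noteq> 0" "d \<noteq> 0" using r s by auto
  then have "r + s = of_int (a * d + c * b) / of_int (b * d)"
    using r s by (simp add: field_simps)
  moreover have "\<not> int p dvd b * d" using r s prime_p by (simp add: prime_dvd_mult_iff)
  ultimately show ?thesis unfolding p_integral_def by blast
qed

lemma p_integral_mult: "p_integral p r \<Longrightarrow> p_integral p s \<Longrightarrow> p_integral p (r * s)"
proof -
  assume "p_integral p r" "p_integral p s"
  then obtain a b c d where r: "r = of_int a / of_int b" "\<not> int p dvd b"
    and s: "s = of_int c / of_int d" "\<not> int p dvd d" unfolding p_integral_def by blast
  have "r * s = of_int (a * c) / of_int (b * d)"
    using r s by simp
  moreover have "\<not> int p dvd b * d" using r s prime_p by (simp add: prime_dvd_mult_iff)
  ultimately show ?thesis unfolding p_integral_def by blast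
qed

lemma p_integral_diff: "p_integral p r \<Longrightarrow> p_integral p s \<Longrightarrow> p_integral p (r - s)"
  using p_integral_add p_integral_mult[OF p_integral_of_int[of "-1"]]
  by (metis diff_conv_add_uminus mult_minus1 of_int_minus of_int_1)

lemma p_integral_inverse_of_nat: "coprime c p \<Longrightarrow> p_integral p (1 / of_nat c)"
  unfolding p_integral_def
  by (rule exI[of _ 1], rule exI[of _ "int c"])
     (use prime_p in \<open>auto simp: coprime_commute prime_imp_coprime coprime_absorb_left\<close>)

lemma p_integral_if_denominator_less: "snd (quotient_of r) < int p \<Longrightarrow> p_integral p r"
proof -
  assume less: "snd (quotient_of r) < int p"
  obtain a b where q: "quotient_of r = (a, b)" by fastforce
  have "r = of_int a / of_int b" using quotient_of_div[OF q] .
  moreover have "\<not> int p dvd b" using less q quotient_of_denom_pos[OF q] by (auto dest: zdvd_imp_le)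
  ultimately show ?thesis unfolding p_integral_def by blast
qed

lemma p_integral_divided_by_powers:
  assumes "\<And>k. p_integral p (r / of_nat p ^ k)"
  shows "r = 0"
proof (rule ccontr)
  assume "r \<noteq> 0"
  obtain x y where q: "quotient_of r = (x, y)" by fastforce
  have y: "y > 0" using quotient_of_denom_pos[OF q] .
  have r: "r = of_int x / of_int y" using quotient_of_div[OF q] .
  have x0: "x \<noteq> 0" using r \<open>r \<noteq> 0\<close> by auto
  define k where "k = nat \<bar>x\<bar>"
  obtain a b where ab: "r / of_nat p ^ k = of_int a / of_int b" "\<not> int p dvd b"
    using assms[of k] unfolding p_integral_def by blast
  have "b \<noteq> 0" using ab by auto
  moreover have "(of_nat p :: rat) \<noteq> 0" using prime_p by (auto simp: prime_def)
  ultimately have "of_int (x * b) = (of_int (a * y * int p ^ k) :: rat)"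
    using ab r y by (simp add: field_simps)
  then have "x * b = a * y * int p ^ k" by (simp only: of_int_eq_iff)
  then have "int p ^ k dvd x * b" by simp
  moreover have "coprime (int p ^ k) b"
    using prime_imp_coprime[of "int p" b] prime_p ab(2) by simp
  ultimately have "int p ^ k dvd x" using coprime_dvd_mult_left_iff by blast
  then have "int p ^ k \<le> \<bar>x\<bar>" using x0 by (metis dvd_abs_iff zdvd_imp_le zero_less_abs_iff)
  moreover have "\<bar>x\<bar> < 2 ^ k" unfolding k_def using less_exp[of "nat \<bar>x\<bar>"]
    by (metis abs_ge_zero int_nat_eq of_nat_less_iff of_nat_numeral of_nat_power)
  moreover have "(2::int) ^ k \<le> int p ^ k" using prime_p by (simp add: power_mono prime_ge_2_nat)
  ultimately show False by linarith
qed

lemma p_integral_residue: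
  assumes "p_integral p r"
  obtains z :: int where "0 \<le> z" "z < int p" "p_integral p ((r - of_int z) / of_nat p)"
proof -
  obtain a b where r: "r = of_int a / of_int b" "\<not> int p dvd b"
    using assms unfolding p_integral_def by blast
  have "b \<noteq> 0" using r by auto
  have "coprime b (int p)"
    using prime_imp_coprime[of "int p" b] prime_p r(2) by (simp add: coprime_commute)
  then obtain u where u: "[b * u = 1] (mod int p)" using cong_solve_coprime_int by blast
  define z where "z = (a * u) mod int p"
  have p0: "int p > 0" using prime_p by (simp add: prime_gt_0_nat)
  have "[b * z = b * (a * u)] (mod int p)" unfolding z_def by (simp add: cong_def mod_mult_right_eq)
  also have "[b * (a * u) = a] (mod int p)"
    using cong_mult[OF cong_refl[of a] u] by (simp add: mult.commute mult.left_commute)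
  finally obtain t where t: "a - b * z = int p * t"
    by (metis cong_iff_dvd_diff cong_sym dvdE)
  have "(r - of_int z) / of_nat p = of_int t / of_int b"
  proof -
    have "r - of_int z = (of_int a - of_int b * of_int z) / of_int b" using r \<open>b \<noteq> 0\<close> by (simp add: field_simps)
    also have "\<dots> = of_int (int p * t) / of_int b" using t by (metis of_int_diff of_int_mult)
    finally show ?thesis using p0 \<open>b \<noteq> 0\<close> by (simp add: field_simps)
  qed
  then have "p_integral p ((r - of_int z) / of_nat p)" using r(2) unfolding p_integral_def by blast
  moreover have "0 \<le> z" "z < int p" unfolding z_def using p0 by auto
  ultimately show ?thesis using that by blast
qed

end

definition rat_lincomb :: "complex set \<Rightarrow> (complex \<Rightarrow> rat) \<Rightarrow> complex" where
  "rat_lincomb B c = (\<Sum>b\<in>B. of_rat (c b) * b)"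

definition rat_independent :: "complex set \<Rightarrow> bool" where
  "rat_independent B \<longleftrightarrow> (\<forall>c. rat_lincomb B c = 0 \<longrightarrow> (\<forall>b\<in>B. c b = 0))"

definition p_integral_span :: "complex set \<Rightarrow> nat \<Rightarrow> complex set" where
  "p_integral_span B p = {rat_lincomb B c | c. \<forall>b\<in>B. p_integral p (c b)}"

lemma rat_span_eq_range: "rat_span B = range (rat_lincomb B)"
  unfolding rat_span_def rat_lincomb_def by auto

lemma rat_lincomb_add: "rat_lincomb B c + rat_lincomb B d = rat_lincomb B (\<lambda>b. c b + d b)"
  unfolding rat_lincomb_def by (simp add: sum.distrib[symmetric] of_rat_add distrib_right)

lemma rat_lincomb_scale: "of_rat r * rat_lincomb B c = rat_lincomb B (\<lambda>b. r * c b)"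
  unfolding rat_lincomb_def by (simp add: sum_distrib_left of_rat_mult mult.assoc)

lemma rat_lincomb_diff: "rat_lincomb B c - rat_lincomb B d = rat_lincomb B (\<lambda>b. c b - d b)"
  unfolding rat_lincomb_def by (simp add: sum_subtractf[symmetric] of_rat_diff left_diff_distrib)

lemma rat_independent_coeffs_eq:
  assumes "rat_independent B" "rat_lincomb B c = rat_lincomb B d" "b \<in> B"
  shows "c b = d b"
  using assms rat_lincomb_diff[of B c d] unfolding rat_independent_def by fastforce

lemma rat_span_mono:
  assumes "finite B" "C \<subseteq> B"
  shows "rat_span C \<subseteq> rat_span B"
proof
  fix x assume "x \<in> rat_span C"
  then obtain c where x: "x = rat_lincomb C c" by (auto simp: rat_span_eq_range)
  have "rat_lincomb B (\<lambda>b. if b \<in> C then c b else 0) = x"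
    unfolding x rat_lincomb_def using assms by (intro sum.mono_neutral_cong_right) auto
  then show "x \<in> rat_span B" by (metis rangeI rat_span_eq_range)
qed

lemma rat_span_remove_dependent:
  assumes "finite C" "rat_lincomb C c = 0" "b0 \<in> C" "c b0 \<noteq> 0"
  shows "rat_span C \<subseteq> rat_span (C - {b0})"
proof
  fix x assume "x \<in> rat_span C"
  define C' where "C' = C - {b0}"
  have split: "rat_lincomb C e = of_rat (e b0) * b0 + rat_lincomb C' e" for e
    unfolding rat_lincomb_def C'_def by (rule sum.remove[OF assms(1,3)])
  have b0_eq: "b0 = of_rat (- 1 / c b0) * rat_lincomb C' c"
    using split[of c] assms(2,4)
    by (simp add: of_rat_divide of_rat_minus field_simps eq_neg_iff_add_eq_0)
  obtain d where "x = rat_lincomb C d" using \<open>x \<in> rat_span C\<close> by (auto simp: rat_span_eq_range)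
  also have "\<dots> = of_rat (d b0) * (of_rat (- 1 / c b0) * rat_lincomb C' c) + rat_lincomb C' d"
    using split b0_eq by metis
  also have "\<dots> = rat_lincomb C' (\<lambda>b. d b0 * (- 1 / c b0) * c b + d b)"
    by (simp add: mult.assoc[symmetric] of_rat_mult[symmetric] rat_lincomb_scale rat_lincomb_add)
  finally show "x \<in> rat_span (C - {b0})" by (simp add: rat_span_eq_range C'_def)
qed

lemma rat_span_independent_subset:
  assumes "finite B"
  obtains C where "C \<subseteq> B" "rat_span C = rat_span B" "rat_independent C"
proof -
  define P where "P C \<longleftrightarrow> C \<subseteq> B \<and> rat_span B \<subseteq> rat_span C" for C
  obtain C where C: "P C" and min: "\<And>D. P D \<Longrightarrow> card C \<le> card D"
    using ex_has_least_nat[of P B card] by (auto simp: P_def)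
  have fin: "finite C" using C assms finite_subset unfolding P_def by blast
  have "rat_independent C"
    unfolding rat_independent_def
  proof (intro allI impI ballI, rule ccontr)
    fix c b0 assume dep: "rat_lincomb C c = 0" "b0 \<in> C" "c b0 \<noteq> 0"
    have "P (C - {b0})"
      using C rat_span_remove_dependent[OF fin dep] unfolding P_def by blast
    moreover have "card (C - {b0}) < card C" using fin dep(2) by (rule card_Diff1_less)
    ultimately show False using min by (meson not_le)
  qed
  then show ?thesis using that C rat_span_mono[OF assms] unfolding P_def by blast
qed

lemma p_integral_span_large_primes:
  assumes "finite B" "finite Y" "Y \<subseteq> rat_span B"
  obtains N where "\<And>p. prime p \<Longrightarrow> N < p \<Longrightarrow> Y \<subseteq> p_integral_span B p"
  using assms(2,3)
proof (induction Y arbitrary: thesis rule: finite_induct)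
  case empty
  then show ?case by blast
next
  case (insert y Y)
  obtain N where N: "\<And>p. prime p \<Longrightarrow> N < p \<Longrightarrow> Y \<subseteq> p_integral_span B p"
    using insert by blast
  obtain c where c: "y = rat_lincomb B c" using insert.prems by (auto simp: rat_span_eq_range)
  define M where "M = (\<Sum>b\<in>B. nat (snd (quotient_of (c b))))"
  have "y \<in> p_integral_span B p" if "prime p" "M < p" for p
  proof -
    have "p_integral p (c b)" if "b \<in> B" for b
    proof -
      have "nat (snd (quotient_of (c b))) \<le> M"
        unfolding M_def using assms(1) that by (intro member_le_sum) auto
      then have "snd (quotient_of (c b)) < int p"
        using \<open>M < p\<close> quotient_of_denom_pos'[of "c b"] by linarith
      then show ?thesis using p_integral_if_denominator_less \<open>prime p\<close> by blast
    qed
    then show ?thesis using c by (auto simp: p_integral_span_def)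
  qed
  then show ?case using insert.prems(1)[of "max N M"] N by auto
qed

text \<open>A finite set of representatives of the Z_(p)-span of B modulo p.\<close>

definition span_residues :: "complex set \<Rightarrow> nat \<Rightarrow> complex set" where
  "span_residues B p = (\<lambda>f. rat_lincomb B (\<lambda>b. of_int (f b))) ` (B \<rightarrow>\<^sub>E {0..<int p})"

lemma finite_span_residues: "finite B \<Longrightarrow> finite (span_residues B p)"
  unfolding span_residues_def by (intro finite_imageI finite_PiE) auto

context
  fixes B :: "complex set" and p :: nat
  assumes prime_p: "prime p"
begin

lemma p_integral_span_add:
  "x \<in> p_integral_span B p \<Longrightarrow> y \<in> p_integral_span B p \<Longrightarrow> x + y \<in> p_integral_span B p"
  using p_integral_add[OF prime_p] by (fastforce simp: p_integral_span_def rat_lincomb_add)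

lemma p_integral_span_diff:
  "x \<in> p_integral_span B p \<Longrightarrow> y \<in> p_integral_span B p \<Longrightarrow> x - y \<in> p_integral_span B p"
  using p_integral_diff[OF prime_p] by (fastforce simp: p_integral_span_def rat_lincomb_diff)

lemma p_integral_span_scale:
  "p_integral p r \<Longrightarrow> x \<in> p_integral_span B p \<Longrightarrow> of_rat r * x \<in> p_integral_span B p"
  using p_integral_mult[OF prime_p] by (fastforce simp: p_integral_span_def rat_lincomb_scale)

lemma p_integral_span_zero: "0 \<in> p_integral_span B p"
proof -
  have "0 = rat_lincomb B (\<lambda>b. of_int 0)" by (simp add: rat_lincomb_def)
  then show ?thesis using p_integral_of_int[OF prime_p, of 0] by (auto simp: p_integral_span_def)
qed

lemma p_integral_span_uminus: "x \<in> p_integral_span B p \<Longrightarrow> - x \<in> p_integral_span B p"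
  using p_integral_span_diff[OF p_integral_span_zero] by simp

lemma p_integral_span_sum:
  "(\<And>i. i \<in> I \<Longrightarrow> f i \<in> p_integral_span B p) \<Longrightarrow> sum f I \<in> p_integral_span B p"
  by (induction I rule: infinite_finite_induct) (simp_all add: p_integral_span_zero p_integral_span_add)

lemma p_integral_span_mult:
  assumes "\<And>b b'. b \<in> B \<Longrightarrow> b' \<in> B \<Longrightarrow> b * b' \<in> p_integral_span B p"
    and "x \<in> p_integral_span B p" "y \<in> p_integral_span B p"
  shows "x * y \<in> p_integral_span B p"
proof -
  obtain c d where c: "\<forall>b\<in>B. p_integral p (c b)" "x = rat_lincomb B c"
    and d: "\<forall>b\<in>B. p_integral p (d b)" "y = rat_lincomb B d"
    using assms(2,3) by (auto simp: p_integral_span_def)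
  have "x * y = (\<Sum>b\<in>B. \<Sum>b'\<in>B. of_rat (c b * d b') * (b * b'))"
    unfolding c d rat_lincomb_def sum_product by (simp add: of_rat_mult algebra_simps)
  also have "\<dots> \<in> p_integral_span B p"
    using c d assms(1) by (intro p_integral_span_sum p_integral_span_scale p_integral_mult[OF prime_p]) auto
  finally show ?thesis .
qed

lemma p_integral_span_divided_by_powers:
  assumes "rat_independent B" "x \<in> p_integral_span B p"
    and "\<And>k. x / of_nat p ^ k \<in> p_integral_span B p"
  shows "x = 0"
proof -
  obtain c where c: "x = rat_lincomb B c" using assms(2) by (auto simp: p_integral_span_def)
  have "c b = 0" if "b \<in> B" for b
  proof (rule p_integral_divided_by_powers[OF prime_p])
    fix k
    obtain d where d: "\<forall>b\<in>B. p_integral p (d b)" "x / of_nat p ^ k = rat_lincomb B d"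
      using assms(3)[of k] by (auto simp: p_integral_span_def)
    have "x / of_nat p ^ k = of_rat (1 / of_nat p ^ k) * rat_lincomb B c"
      using c by (simp add: of_rat_divide of_rat_power)
    then have "rat_lincomb B (\<lambda>b. 1 / of_nat p ^ k * c b) = rat_lincomb B d"
      using d(2) by (simp add: rat_lincomb_scale)
    from rat_independent_coeffs_eq[OF assms(1) this that] have "c b / of_nat p ^ k = d b" by simp
    then show "p_integral p (c b / of_nat p ^ k)" using d(1) that by simp
  qed
  then show ?thesis using c by (simp add: rat_lincomb_def)
qed

lemma p_integral_span_residue:
  assumes "x \<in> p_integral_span B p"
  obtains z where "z \<in> span_residues B p" "(x - z) / of_nat p \<in> p_integral_span B p"
proof -
  obtain c where c: "\<forall>b\<in>B. p_integral p (c b)" "x = rat_lincomb B c"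
    using assms by (auto simp: p_integral_span_def)
  have "\<forall>b\<in>B. \<exists>z. 0 \<le> z \<and> z < int p \<and> p_integral p ((c b - of_int z) / of_nat p)"
    using c(1) p_integral_residue[OF prime_p] by metis
  then obtain g where g: "\<forall>b\<in>B. 0 \<le> g b \<and> g b < int p \<and> p_integral p ((c b - of_int (g b)) / of_nat p)"
    by metis
  define f where "f = restrict g B"
  have "f \<in> B \<rightarrow>\<^sub>E {0..<int p}" using g by (auto simp: f_def)
  then have z: "rat_lincomb B (\<lambda>b. of_int (f b)) \<in> span_residues B p" by (auto simp: span_residues_def)
  have "rat_lincomb B (\<lambda>b. of_int (f b)) = rat_lincomb B (\<lambda>b. of_int (g b))"
    unfolding rat_lincomb_def f_def by (rule sum.cong) auto
  then have "(x - rat_lincomb B (\<lambda>b. of_int (f b))) / of_nat p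
      = of_rat (1 / of_nat p) * rat_lincomb B (\<lambda>b. c b - of_int (g b))"
    using c(2) by (simp add: rat_lincomb_diff of_rat_divide)
  also have "\<dots> = rat_lincomb B (\<lambda>b. (c b - of_int (g b)) / of_nat p)"
    by (simp add: rat_lincomb_scale)
  finally have "(x - rat_lincomb B (\<lambda>b. of_int (f b))) / of_nat p
      = rat_lincomb B (\<lambda>b. (c b - of_int (g b)) / of_nat p)" .
  moreover have "rat_lincomb B (\<lambda>b. (c b - of_int (g b)) / of_nat p) \<in> p_integral_span B p"
    using g by (auto simp: p_integral_span_def)
  ultimately show ?thesis using that z by metis
qed

end

section \<open>Square matrices as a ring\<close>

text \<open>On \<open>complex^'n^'n\<close> the operation \<open>*\<close> is componentwise; this copy of the type carries
  the matrix ring structure, with \<open>**\<close> as multiplication.\<close>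

typedef ('n::finite) sqmat = "UNIV :: (complex^'n^'n) set"
  morphisms mat_of Sqmat ..

setup_lifting type_definition_sqmat

instantiation sqmat :: (finite) ring_1
begin

lift_definition zero_sqmat :: "'a sqmat" is "0 :: complex^'a^'a" .
lift_definition one_sqmat :: "'a sqmat" is "mat 1 :: complex^'a^'a" .
lift_definition plus_sqmat :: "'a sqmat \<Rightarrow> 'a sqmat \<Rightarrow> 'a sqmat" is "(+) :: complex^'a^'a \<Rightarrow> _" .
lift_definition minus_sqmat :: "'a sqmat \<Rightarrow> 'a sqmat \<Rightarrow> 'a sqmat" is "(-) :: complex^'a^'a \<Rightarrow> _" .
lift_definition uminus_sqmat :: "'a sqmat \<Rightarrow> 'a sqmat" is "uminus :: complex^'a^'a \<Rightarrow> _" .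
lift_definition times_sqmat :: "'a sqmat \<Rightarrow> 'a sqmat \<Rightarrow> 'a sqmat" is "(**) :: complex^'a^'a \<Rightarrow> _" .

instance
proof
  fix a b c :: "'a sqmat"
  show "a * b * c = a * (b * c)" by transfer (simp add: matrix_mul_assoc)
  show "1 * a = a" by transfer simp
  show "a * 1 = a" by transfer simp
  show "(a + b) * c = a * c + b * c"
    by transfer (simp add: matrix_matrix_mult_def vec_eq_iff distrib_right sum.distrib)
  show "a * (b + c) = a * b + a * c" by transfer (rule matrix_add_ldistrib)
  show "a + b + c = a + (b + c)" by transfer (rule add.assoc)
  show "a + b = b + a" by transfer (rule add.commute)
  show "0 + a = a" by transfer simp
  show "- a + a = 0" by transfer simp
  show "a - b = a + - b" by transfer simp
  show "(0::'a sqmat) \<noteq> 1" by transfer (simp add: vec_eq_iff mat_def)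
qed

end

lemmas Sqmat_mult = times_sqmat.abs_eq[symmetric]
lemmas Sqmat_one = one_sqmat.abs_eq[symmetric]

lemma mat_of_of_nat: "mat_of (of_nat c) = mat (of_nat c)"
  by (induction c) (simp_all add: zero_sqmat.rep_eq one_sqmat.rep_eq plus_sqmat.rep_eq vec_eq_iff mat_def)

lemma mat_of_of_nat_mult: "mat_of (of_nat c * M) $ i $ j = of_nat c * mat_of M $ i $ j"
proof -
  have "mat_of (of_nat c * M) $ i $ j = (\<Sum>k\<in>UNIV. (if i = k then of_nat c else 0) * mat_of M $ k $ j)"
    by (simp add: times_sqmat.rep_eq mat_of_of_nat matrix_matrix_mult_def mat_def)
  also have "\<dots> = (\<Sum>k\<in>UNIV. if i = k then of_nat c * mat_of M $ k $ j else 0)"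
    by (rule sum.cong) auto
  finally show ?thesis by simp
qed

lemma GLC_simps [simp]:
  "carrier GLC = {A. invertible A}" "mult GLC = (**)" "one GLC = mat 1"
  by (simp_all add: GLC_def)

lemma group_GLC: "group (GLC :: (complex^'n::finite^'n) monoid)"
proof (rule groupI)
  fix A B C :: "complex^'n^'n"
  show "A \<in> carrier GLC \<Longrightarrow> B \<in> carrier GLC \<Longrightarrow> A \<otimes>\<^bsub>GLC\<^esub> B \<in> carrier GLC"
    by (simp add: invertible_mult)
  show "\<one>\<^bsub>GLC\<^esub> \<in> carrier GLC" by (simp add: invertible_def)
  show "A \<otimes>\<^bsub>GLC\<^esub> B \<otimes>\<^bsub>GLC\<^esub> C = A \<otimes>\<^bsub>GLC\<^esub> (B \<otimes>\<^bsub>GLC\<^esub> C)"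
    by (simp add: matrix_mul_assoc)
  show "\<one>\<^bsub>GLC\<^esub> \<otimes>\<^bsub>GLC\<^esub> A = A" by simp
  assume "A \<in> carrier GLC"
  then show "\<exists>B\<in>carrier GLC. B \<otimes>\<^bsub>GLC\<^esub> A = \<one>\<^bsub>GLC\<^esub>"
    by (auto simp: invertible_def)
qed

lemma Sqmat_GLC_pow: "Sqmat (A [^]\<^bsub>GLC\<^esub> (m::nat)) = Sqmat A ^ m"
  by (induction m) (simp_all add: Sqmat_one Sqmat_mult power_Suc2 del: power_Suc)

lemma Sqmat_GLC_inv:
  assumes "A \<in> carrier GLC"
  shows "Sqmat (inv\<^bsub>GLC\<^esub> A) * Sqmat A = 1" "Sqmat A * Sqmat (inv\<^bsub>GLC\<^esub> A) = 1"
  using group.l_inv[OF group_GLC assms] group.r_inv[OF group_GLC assms]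
  by (simp_all add: Sqmat_mult[symmetric] Sqmat_one[symmetric])

lemma strictly_upper_triangular_nilpotent:
  fixes N :: "'n::{finite,linorder} sqmat"
  assumes upper: "\<And>i j. j \<le> i \<Longrightarrow> mat_of N $ i $ j = 0"
  shows "N ^ CARD('n) = 0"
proof -
  have path: "m + card {..<i} \<le> card {..<j}" if "mat_of (N ^ m) $ i $ j \<noteq> 0" for m i j
    using that
  proof (induction m arbitrary: i)
    case 0
    then show ?case by (simp add: one_sqmat.rep_eq mat_def split: if_splits)
  next
    case (Suc m)
    have "(\<Sum>k\<in>UNIV. mat_of N $ i $ k * mat_of (N ^ m) $ k $ j) \<noteq> 0"
      using Suc.prems by (simp add: times_sqmat.rep_eq matrix_matrix_mult_def)
    then obtain k where "mat_of N $ i $ k * mat_of (N ^ m) $ k $ j \<noteq> 0"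
      using sum.not_neutral_contains_not_neutral by blast
    then have ik: "mat_of N $ i $ k \<noteq> 0" and kj: "mat_of (N ^ m) $ k $ j \<noteq> 0"
      by simp_all
    have "i < k" using upper[of k i] ik not_less by blast
    then have "card {..<i} < card {..<k}"
      by (simp add: psubset_card_mono lessThan_strict_subset_iff)
    then show ?case using Suc.IH[OF kj] by simp
  qed
  have "mat_of (N ^ CARD('n)) $ i $ j = 0" for i j
  proof (rule ccontr)
    assume "mat_of (N ^ CARD('n)) $ i $ j \<noteq> 0"
    then have "CARD('n) + card {..<i} \<le> card {..<j}" by (rule path)
    moreover have "card {..<j} < CARD('n)" by (rule psubset_card_mono) auto
    ultimately show False by linarith
  qed
  then have "mat_of (N ^ CARD('n)) = mat_of 0"
    by (simp add: vec_eq_iff zero_sqmat.rep_eq)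
  then show ?thesis by (simp add: mat_of_inject)
qed

lemma unipotent_subgroup_nilpotent:
  fixes Gamma :: "((complex, 'n::{finite,linorder}) vec, 'n) vec set"
  assumes "unipotent_subgroup Gamma" "C \<in> Gamma"
  shows "(Sqmat C - 1) ^ CARD('n) = 0"
proof -
  obtain P :: "((complex, 'n) vec, 'n) vec" where P: "invertible P"
    and triangular: "\<forall>A\<in>Gamma. upper_unitriangular (matrix_inv P ** A ** P)"
    using assms(1) unfolding unipotent_subgroup_def by blast
  have "P ** matrix_inv P = mat 1 \<and> matrix_inv P ** P = mat 1"
    unfolding matrix_inv_def by (rule someI_ex) (use P in \<open>simp add: invertible_def\<close>)
  then have inv: "Sqmat (matrix_inv P) * Sqmat P = 1" "Sqmat P * Sqmat (matrix_inv P) = 1"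
    by (simp_all add: Sqmat_mult[symmetric] Sqmat_one[symmetric])
  define U where "U = Sqmat (matrix_inv P ** C ** P)"
  have nil: "(U - 1) ^ CARD('n) = 0"
    using triangular assms(2) unfolding U_def
    by (intro strictly_upper_triangular_nilpotent)
      (auto simp: upper_unitriangular_def minus_sqmat.rep_eq one_sqmat.rep_eq mat_def Sqmat_inverse
            dest: le_neq_trans)
  have "Sqmat P * U * Sqmat (matrix_inv P) =
      (Sqmat P * Sqmat (matrix_inv P)) * Sqmat C * (Sqmat P * Sqmat (matrix_inv P))"
    by (simp add: U_def Sqmat_mult mult.assoc)
  then have "Sqmat C - 1 = Sqmat P * (U - 1) * Sqmat (matrix_inv P)"
    by (simp add: inv left_diff_distrib right_diff_distrib)
  then have "(Sqmat C - 1) ^ CARD('n) = Sqmat P * (U - 1) ^ CARD('n) * Sqmat (matrix_inv P)"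
    by (simp only: power_conjugate[OF inv])
  then show ?thesis by (metis nil mult_zero_left mult_zero_right)
qed

section \<open>Matrices with p-integral entries\<close>

definition integral_matrices :: "complex set \<Rightarrow> nat \<Rightarrow> 'n::finite sqmat set" where
  "integral_matrices B p = {M. \<forall>i j. mat_of M $ i $ j \<in> p_integral_span B p}"

lemma mat_of_p_power_mult: "mat_of (of_nat p ^ k * M) $ i $ j = of_nat p ^ k * mat_of M $ i $ j"
  using mat_of_of_nat_mult[of "p ^ k" M i j] by simp

lemma integral_matrices_unit:
  assumes p: "prime p" and one: "1 \<in> p_integral_span B p" and c: "coprime c p"
  shows "\<exists>u\<in>integral_matrices B p. u * of_nat c = (1 :: 'n::finite sqmat)"
proof
  have "c \<noteq> 0"
  proof
    assume "c = 0"
    then have "p = 1" using c by simp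
    then show False using p by simp
  qed
  define u :: "'n sqmat" where "u = Sqmat (mat (of_rat (1 / of_nat c)))"
  have "mat_of (of_nat c * u) = mat_of 1"
    using \<open>c \<noteq> 0\<close> by (simp add: vec_eq_iff mat_of_of_nat_mult u_def Sqmat_inverse one_sqmat.rep_eq
        mat_def of_rat_divide)
  then show "u * of_nat c = 1" by (simp add: mat_of_inject mult_of_nat_commute)
  have "of_rat (1 / of_nat c) * 1 \<in> p_integral_span B p"
    using p_integral_span_scale[OF p p_integral_inverse_of_nat[OF p c] one] .
  then show "u \<in> integral_matrices B p"
    using p_integral_span_zero[OF p] by (simp add: integral_matrices_def u_def Sqmat_inverse mat_def)
qed

lemma integral_matrices_separated:
  assumes p: "prime p" and B: "rat_independent B"
    and M: "M \<in> integral_matrices B p" "M \<noteq> 0"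
  shows "\<exists>k. \<forall>M'\<in>integral_matrices B p. M \<noteq> of_nat p ^ k * M'"
proof (rule ccontr)
  assume "\<nexists>k. \<forall>M'\<in>integral_matrices B p. M \<noteq> of_nat p ^ k * M'"
  then have all: "\<forall>k. \<exists>M'\<in>integral_matrices B p. M = of_nat p ^ k * M'" by blast
  have p0: "(of_nat p :: complex) \<noteq> 0" using p by (auto simp: prime_def)
  have "mat_of M $ i $ j / of_nat p ^ k \<in> p_integral_span B p" for i j k
  proof -
    obtain M' where "M' \<in> integral_matrices B p" "M = of_nat p ^ k * M'" using all by blast
    then show ?thesis using p0 by (simp add: integral_matrices_def mat_of_p_power_mult)
  qed
  then have "mat_of M $ i $ j = 0" for i j
    using M(1) by (intro p_integral_span_divided_by_powers[OF p B]) (auto simp: integral_matrices_def)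
  then have "mat_of M = mat_of 0" by (simp add: vec_eq_iff zero_sqmat.rep_eq)
  then show False using M(2) by (simp add: mat_of_inject)
qed

lemma p_adic_order_integral_matrices:
  assumes p: "prime p" "p > 2" and B: "rat_independent B"
    and one: "1 \<in> p_integral_span B p"
    and mult: "\<And>b b'. b \<in> B \<Longrightarrow> b' \<in> B \<Longrightarrow> b * b' \<in> p_integral_span B p"
  shows "p_adic_order (integral_matrices B p :: 'n::finite sqmat set) p"
proof
  note span = p_integral_span_zero[OF p(1)] p_integral_span_add[OF p(1)]
    p_integral_span_uminus[OF p(1)] p_integral_span_sum[OF p(1)]
    p_integral_span_mult[OF p(1) mult]
  fix M M' :: "'n sqmat" and c :: nat
  show "prime p" "p > 2" by (fact p)+
  show "1 \<in> integral_matrices B p"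
    using one span by (simp add: integral_matrices_def one_sqmat.rep_eq mat_def)
  show "M \<in> integral_matrices B p \<Longrightarrow> M' \<in> integral_matrices B p \<Longrightarrow> M + M' \<in> integral_matrices B p"
    using span by (simp add: integral_matrices_def plus_sqmat.rep_eq)
  show "M \<in> integral_matrices B p \<Longrightarrow> - M \<in> integral_matrices B p"
    using span by (simp add: integral_matrices_def uminus_sqmat.rep_eq)
  show "M * M' \<in> integral_matrices B p"
    if "M \<in> integral_matrices B p" "M' \<in> integral_matrices B p"
    using that unfolding integral_matrices_def
    by (auto simp: times_sqmat.rep_eq matrix_matrix_mult_def intro!: span(4,5))
  show "coprime c p \<Longrightarrow> \<exists>u\<in>integral_matrices B p. u * of_nat c = 1"
    by (rule integral_matrices_unit[OF p(1) one])
  show "M = 0" if "of_nat p * M = 0"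
  proof -
    have "(of_nat p :: complex) \<noteq> 0" using p(1) by (auto simp: prime_def)
    moreover have "mat_of (of_nat p * M) $ i $ j = 0" for i j using that by (simp add: zero_sqmat.rep_eq)
    ultimately have "mat_of M = mat_of 0" by (simp add: vec_eq_iff mat_of_of_nat_mult zero_sqmat.rep_eq)
    then show ?thesis by (simp add: mat_of_inject)
  qed
  show "M \<in> integral_matrices B p \<Longrightarrow> M \<noteq> 0 \<Longrightarrow> \<exists>k. \<forall>M'\<in>integral_matrices B p. M \<noteq> of_nat p ^ k * M'"
    by (rule integral_matrices_separated[OF p(1) B])
qed

definition matrix_residues :: "complex set \<Rightarrow> nat \<Rightarrow> 'n::finite sqmat set" where
  "matrix_residues B p = (\<lambda>z. Sqmat (\<chi> i j. z (i, j))) ` (UNIV \<rightarrow>\<^sub>E span_residues B p)"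

lemma finite_matrix_residues: "finite B \<Longrightarrow> finite (matrix_residues B p)"
  unfolding matrix_residues_def by (intro finite_imageI finite_PiE finite_span_residues) auto

lemma integral_matrices_residue:
  fixes M :: "'n::finite sqmat"
  assumes p: "prime p" and M: "M \<in> integral_matrices B p"
  obtains Z Y where "Z \<in> matrix_residues B p" "Y \<in> integral_matrices B p" "M - Z = of_nat p * Y"
proof -
  have "\<exists>z. z \<in> span_residues B p \<and> (mat_of M $ fst ij $ snd ij - z) / of_nat p \<in> p_integral_span B p"
    for ij
  proof -
    have "mat_of M $ fst ij $ snd ij \<in> p_integral_span B p" using M by (simp add: integral_matrices_def)
    then obtain z where "z \<in> span_residues B p"
      "(mat_of M $ fst ij $ snd ij - z) / of_nat p \<in> p_integral_span B p"
      by (rule p_integral_span_residue[OF p])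
    then show ?thesis by blast
  qed
  then obtain z where z: "\<And>ij. z ij \<in> span_residues B p"
    "\<And>ij. (mat_of M $ fst ij $ snd ij - z ij) / of_nat p \<in> p_integral_span B p"
    by metis
  define Z :: "'n sqmat" where "Z = Sqmat (\<chi> i j. z (i, j))"
  define Y :: "'n sqmat" where "Y = Sqmat (\<chi> i j. (mat_of M $ i $ j - z (i, j)) / of_nat p)"
  have "Z \<in> matrix_residues B p" using z(1) by (auto simp: matrix_residues_def Z_def)
  moreover have "Y \<in> integral_matrices B p"
    using z(2)[of "(i, j)" for i j] by (simp add: integral_matrices_def Y_def Sqmat_inverse)
  moreover have "M - Z = of_nat p * Y"
  proof -
    have "(of_nat p :: complex) \<noteq> 0" using p by (auto simp: prime_def)
    then have "mat_of (M - Z) = mat_of (of_nat p * Y)"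
      by (simp add: vec_eq_iff mat_of_of_nat_mult minus_sqmat.rep_eq Y_def Z_def Sqmat_inverse)
    then show ?thesis by (simp add: mat_of_inject)
  qed
  ultimately show ?thesis using that by blast
qed

lemma integral_matrices_finite_residues:
  assumes p: "prime p" and B: "finite B"
  shows "\<exists>F. finite F \<and> (\<forall>M\<in>integral_matrices B p. \<exists>Z\<in>F. \<exists>Y\<in>integral_matrices B p.
    M - Z = of_nat p * (Y :: 'n::finite sqmat))"
proof (intro exI conjI ballI)
  show "finite (matrix_residues B p :: 'n sqmat set)" using finite_matrix_residues[OF B] .
  fix M :: "'n sqmat" assume "M \<in> integral_matrices B p"
  then obtain Z Y where "Z \<in> matrix_residues B p" "Y \<in> integral_matrices B p" "M - Z = of_nat p * Y"
    by (rule integral_matrices_residue[OF p])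
  then show "\<exists>Z\<in>matrix_residues B p. \<exists>Y\<in>integral_matrices B p. M - Z = of_nat p * Y" by blast
qed

section \<open>Congruence subgroups\<close>

locale integral_matrix_group = p_adic_order R p
  for R :: "'n::{finite,linorder} sqmat set" and p +
  fixes Lambda Gamma :: "((complex, 'n) vec, 'n) vec set"
  assumes subgroup_Lambda: "subgroup Lambda GLC"
    and Lambda_integral: "Sqmat ` Lambda \<subseteq> R"
    and unipotent_Gamma: "unipotent_subgroup Gamma"
    and Gamma_subset: "Gamma \<subseteq> Lambda"
    and finite_residues: "\<exists>F. finite F \<and> (\<forall>x\<in>R. \<exists>z\<in>F. \<exists>y\<in>R. x - z = of_nat p * y)"
begin

text \<open>The elements of Lambda congruent modulo p to an element of Gamma, i.e. Lambda(p) Gamma for the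
  principal congruence subgroup Lambda(p).\<close>

definition congruence_closure :: "((complex, 'n) vec, 'n) vec set" where
  "congruence_closure = {g \<in> Lambda. \<exists>c\<in>Gamma. Sqmat g - Sqmat c \<in> multiples 1}"

lemma subgroup_Gamma: "subgroup Gamma GLC"
  using unipotent_Gamma by (simp add: unipotent_subgroup_def)

lemma Lambda_carrier: "g \<in> Lambda \<Longrightarrow> g \<in> carrier GLC"
  using subgroup.mem_carrier[OF subgroup_Lambda] .

lemma Sqmat_mem: "g \<in> Lambda \<Longrightarrow> Sqmat g \<in> R"
  using Lambda_integral by blast

lemma Sqmat_inv_mem: "g \<in> Lambda \<Longrightarrow> Sqmat (inv\<^bsub>GLC\<^esub> g) \<in> R"
  using Sqmat_mem subgroup.m_inv_closed[OF subgroup_Lambda] by blast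

lemma Gamma_subset_congruence_closure: "Gamma \<subseteq> congruence_closure"
proof
  fix c assume "c \<in> Gamma"
  then show "c \<in> congruence_closure"
    using Gamma_subset zero_in_multiples[of 1] unfolding congruence_closure_def by force
qed

lemma subgroup_congruence_closure: "subgroup congruence_closure GLC"
proof (rule group.subgroupI[OF group_GLC])
  show "congruence_closure \<subseteq> carrier GLC"
    using Lambda_carrier by (auto simp: congruence_closure_def)
  show "congruence_closure \<noteq> {}"
    using Gamma_subset_congruence_closure subgroup.one_closed[OF subgroup_Gamma] by blast
next
  fix a assume "a \<in> congruence_closure"
  then obtain c where a: "a \<in> Lambda" and c: "c \<in> Gamma" "Sqmat a - Sqmat c \<in> multiples 1"
    by (auto simp: congruence_closure_def)
  have c': "c \<in> Lambda" using c(1) Gamma_subset by blast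
  have "Sqmat (inv\<^bsub>GLC\<^esub> a) - Sqmat (inv\<^bsub>GLC\<^esub> c) \<in> multiples 1"
    by (rule inverse_diff_multiples[OF Sqmat_inv_mem[OF a] Sqmat_inv_mem[OF c']
          Sqmat_GLC_inv(1)[OF Lambda_carrier[OF a]] Sqmat_GLC_inv(2)[OF Lambda_carrier[OF c']] c(2)])
  then show "inv\<^bsub>GLC\<^esub> a \<in> congruence_closure"
    using subgroup.m_inv_closed[OF subgroup_Lambda a] subgroup.m_inv_closed[OF subgroup_Gamma c(1)]
    by (auto simp: congruence_closure_def)
next
  fix a b assume "a \<in> congruence_closure" "b \<in> congruence_closure"
  then obtain c d where a: "a \<in> Lambda" "c \<in> Gamma" "Sqmat a - Sqmat c \<in> multiples 1"
    and b: "b \<in> Lambda" "d \<in> Gamma" "Sqmat b - Sqmat d \<in> multiples 1"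
    by (auto simp: congruence_closure_def)
  have "Sqmat a * Sqmat b - Sqmat c * Sqmat d \<in> multiples 1"
    using a b Sqmat_mem Gamma_subset by (intro mult_diff_multiples) auto
  moreover have "a ** b \<in> Lambda" "c ** d \<in> Gamma"
    using subgroup.m_closed[OF subgroup_Lambda a(1) b(1)] subgroup.m_closed[OF subgroup_Gamma a(2) b(2)]
    by simp_all
  ultimately show "a \<otimes>\<^bsub>GLC\<^esub> b \<in> congruence_closure"
    unfolding congruence_closure_def by (auto simp: Sqmat_mult intro!: bexI[of _ "c ** d"])
qed

lemma congruence_closure_torsion:
  assumes "g \<in> congruence_closure" "g [^]\<^bsub>GLC\<^esub> (m::nat) = \<one>\<^bsub>GLC\<^esub>" "m > 0"
  shows "Sqmat g ^ (p ^ CARD('n)) = 1"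
proof -
  obtain c where g: "g \<in> Lambda" and c: "c \<in> Gamma" "Sqmat g - Sqmat c \<in> multiples 1"
    using assms(1) by (auto simp: congruence_closure_def)
  have "Sqmat g ^ m = 1"
    using assms(2) Sqmat_GLC_pow[of g m] by (simp add: Sqmat_one[symmetric])
  moreover have "Sqmat c \<in> R" using Sqmat_mem c(1) Gamma_subset by blast
  ultimately show ?thesis
    using congruent_unipotent_torsion[OF Sqmat_mem[OF g] _ c(2)
        unipotent_subgroup_nilpotent[OF unipotent_Gamma c(1)] _ assms(3)]
    by simp
qed

lemma congruence_closure_classifier:
  obtains key :: "((complex, 'n) vec, 'n) vec \<Rightarrow> 'n sqmat set"
  where "finite (key ` Lambda)"
    "\<And>a b. a \<in> Lambda \<Longrightarrow> b \<in> Lambda \<Longrightarrow> key a = key b \<Longrightarrow> a \<otimes>\<^bsub>GLC\<^esub> inv\<^bsub>GLC\<^esub> b \<in> congruence_closure"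
proof -
  obtain F where F: "finite F" "\<forall>x\<in>R. \<exists>z\<in>F. \<exists>y\<in>R. x - z = of_nat p * y"
    using finite_residues by blast
  define key where "key g = {z \<in> F. Sqmat g - z \<in> multiples 1}" for g
  have "key ` Lambda \<subseteq> Pow F" by (auto simp: key_def)
  then have "finite (key ` Lambda)" using F(1) by (simp add: finite_subset)
  moreover have "a \<otimes>\<^bsub>GLC\<^esub> inv\<^bsub>GLC\<^esub> b \<in> congruence_closure"
    if ab: "a \<in> Lambda" "b \<in> Lambda" "key a = key b" for a b
  proof -
    obtain z y where z: "z \<in> F" "y \<in> R" "Sqmat b - z = of_nat p * y"
      using F(2) Sqmat_mem[OF ab(2)] by blast
    have zb: "Sqmat b - z \<in> multiples 1" using multiplesI[OF z(2), of 1] z(3) by simp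
    have za: "Sqmat a - z \<in> multiples 1" using z(1) zb ab(3) by (auto simp: key_def)
    from multiples_diff[OF za zb] have "Sqmat a - Sqmat b \<in> multiples 1" by simp
    from multiples_mult[OF this, of _ 0] Sqmat_inv_mem[OF ab(2)]
    have "(Sqmat a - Sqmat b) * Sqmat (inv\<^bsub>GLC\<^esub> b) \<in> multiples 1" by simp
    moreover have "(Sqmat a - Sqmat b) * Sqmat (inv\<^bsub>GLC\<^esub> b) = Sqmat (a ** inv\<^bsub>GLC\<^esub> b) - Sqmat (mat 1)"
      using Sqmat_GLC_inv(2)[OF Lambda_carrier[OF ab(2)]]
      by (simp add: Sqmat_mult left_diff_distrib Sqmat_one[symmetric])
    moreover have "a ** inv\<^bsub>GLC\<^esub> b \<in> Lambda"
      using subgroup.m_closed[OF subgroup_Lambda ab(1) subgroup.m_inv_closed[OF subgroup_Lambda ab(2)]]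
      by simp
    ultimately show ?thesis
      using subgroup.one_closed[OF subgroup_Gamma] by (auto simp: congruence_closure_def)
  qed
  ultimately show ?thesis using that by blast
qed

end

lemma Sqmat_generate_subset:
  fixes R :: "'n::finite sqmat set"
  assumes "1 \<in> R" "\<And>x y. x \<in> R \<Longrightarrow> y \<in> R \<Longrightarrow> x * y \<in> R"
    and "\<And>A. A \<in> S \<Longrightarrow> Sqmat A \<in> R" "\<And>A. A \<in> S \<Longrightarrow> Sqmat (inv\<^bsub>GLC\<^esub> A) \<in> R"
  shows "Sqmat ` generate GLC S \<subseteq> R"
proof -
  have "Sqmat g \<in> R" if "g \<in> generate GLC S" for g
    using that
    by (induction rule: generate.induct) (simp_all add: assms Sqmat_one Sqmat_mult)
  then show ?thesis by blast
qed

lemma number_field_p_integral_basis: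
  assumes K: "number_field K" and E: "finite E" "E \<subseteq> K"
  obtains B N where "finite B" "rat_independent B"
    "\<And>p. prime p \<Longrightarrow> N < p \<Longrightarrow> 1 \<in> p_integral_span B p \<and>
       (\<forall>b\<in>B. \<forall>b'\<in>B. b * b' \<in> p_integral_span B p) \<and> E \<subseteq> p_integral_span B p"
proof -
  obtain B0 where B0: "finite B0" "B0 \<subseteq> K" "K = rat_span B0"
    using K unfolding number_field_def by blast
  obtain B where B: "B \<subseteq> B0" "rat_span B = rat_span B0" "rat_independent B"
    using rat_span_independent_subset[OF B0(1)] by blast
  have "finite B" using B(1) B0(1) finite_subset by blast
  have K_closed: "1 \<in> K" "\<And>x y. x \<in> K \<Longrightarrow> y \<in> K \<Longrightarrow> x * y \<in> K"
    using K unfolding number_field_def by blast+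
  define Y where "Y = insert 1 ({b * b' | b b'. b \<in> B \<and> b' \<in> B} \<union> E)"
  have "finite Y" unfolding Y_def using \<open>finite B\<close> E(1) by (simp add: finite_image_set2)
  moreover have "Y \<subseteq> rat_span B"
  proof
    fix y assume "y \<in> Y"
    then consider "y = 1" | b b' where "b \<in> B" "b' \<in> B" "y = b * b'" | "y \<in> E"
      unfolding Y_def by blast
    then have "y \<in> K" by cases (use K_closed B(1) B0(2) E(2) in auto)
    then show "y \<in> rat_span B" using B(2) B0(3) by simp
  qed
  ultimately obtain N where N: "\<And>p. prime p \<Longrightarrow> N < p \<Longrightarrow> Y \<subseteq> p_integral_span B p"
    using p_integral_span_large_primes[OF \<open>finite B\<close>] by blast
  show ?thesis
  proof (rule that[OF \<open>finite B\<close> B(3)])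
    fix p :: nat assume "prime p" "N < p"
    then show "1 \<in> p_integral_span B p \<and> (\<forall>b\<in>B. \<forall>b'\<in>B. b * b' \<in> p_integral_span B p) \<and>
        E \<subseteq> p_integral_span B p"
      using N unfolding Y_def by blast
  qed
qed

lemma integral_matrix_group_for_large_primes:
  fixes Lambda Gamma :: "((complex, 'n::{finite,linorder}) vec, 'n) vec set"
  assumes K: "number_field K"
    and Lambda: "subgroup Lambda GLC" "\<forall>A\<in>Lambda. entries_in K A"
    and S: "finite S" "S \<subseteq> carrier GLC" "Lambda = generate GLC S"
    and Gamma: "unipotent_subgroup Gamma" "Gamma \<subseteq> Lambda"
  obtains N where "\<And>p. prime p \<Longrightarrow> N < p \<Longrightarrow> \<exists>R. integral_matrix_group R p Lambda Gamma"
proof -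
  define T where "T = S \<union> (\<lambda>A. inv\<^bsub>GLC\<^esub> A) ` S"
  define E where "E = (\<Union>A\<in>T. {A $ i $ j | i j. True})"
  have "finite {A $ i $ j | i j. True}" for A :: "((complex, 'n) vec, 'n) vec"
    using finite_image_set2[of "\<lambda>_. True" "\<lambda>_. True" "\<lambda>i j. A $ i $ j"] by simp
  then have "finite E" unfolding E_def T_def using S(1) by simp
  have "T \<subseteq> Lambda" unfolding T_def S(3) by (auto intro: generate.incl generate.inv)
  then have "E \<subseteq> K" using Lambda(2) by (auto simp: E_def entries_in_def)
  obtain B N where B: "finite B" "rat_independent B"
    and N: "\<And>p. prime p \<Longrightarrow> N < p \<Longrightarrow> 1 \<in> p_integral_span B p \<and>
       (\<forall>b\<in>B. \<forall>b'\<in>B. b * b' \<in> p_integral_span B p) \<and> E \<subseteq> p_integral_span B p"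
    using number_field_p_integral_basis[OF K \<open>finite E\<close> \<open>E \<subseteq> K\<close>] by blast
  show ?thesis
  proof (rule that[of "max N 2"])
    fix p :: nat assume p: "prime p" "max N 2 < p"
    then have p2: "p > 2" by simp
    have span: "1 \<in> p_integral_span B p" "\<And>b b'. b \<in> B \<Longrightarrow> b' \<in> B \<Longrightarrow> b * b' \<in> p_integral_span B p"
      "E \<subseteq> p_integral_span B p"
      using N[of p] p by auto
    note order = p_adic_order_integral_matrices[OF p(1) p2 B(2) span(1,2)]
    interpret p_adic_order "integral_matrices B p :: 'n sqmat set" p by (rule order)
    have "A $ i $ j \<in> E" if "A \<in> T" for A i j using that by (auto simp: E_def)
    then have "Sqmat A \<in> integral_matrices B p" if "A \<in> T" for A
      using that span(3) by (auto simp: integral_matrices_def Sqmat_inverse)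
    then have "Sqmat ` Lambda \<subseteq> integral_matrices B p"
      unfolding S(3) by (intro Sqmat_generate_subset[OF one_mem mult_mem]) (simp_all add: T_def)
    moreover note integral_matrices_finite_residues[OF p(1) B(1), where 'n='n]
    ultimately have "integral_matrix_group (integral_matrices B p) p Lambda Gamma"
      using order Lambda(1) Gamma by (simp add: integral_matrix_group_def integral_matrix_group_axioms_def)
    then show "\<exists>R. integral_matrix_group R p Lambda Gamma" by blast
  qed
qed

lemma torsion_free_Int_congruence_closures:
  fixes Lambda Gamma :: "((complex, 'n::{finite,linorder}) vec, 'n) vec set"
  assumes P: "integral_matrix_group R p Lambda Gamma"
    and Q: "integral_matrix_group R' q Lambda Gamma" and "p \<noteq> q"
  shows "torsion_free (integral_matrix_group.congruence_closure R p Lambda Gamma \<inter>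
    integral_matrix_group.congruence_closure R' q Lambda Gamma)"
  unfolding torsion_free_def
proof (intro ballI allI impI)
  interpret P: integral_matrix_group R p Lambda Gamma by (rule P)
  interpret Q: integral_matrix_group R' q Lambda Gamma by (rule Q)
  fix g and m :: nat
  assume g: "g \<in> P.congruence_closure \<inter> Q.congruence_closure" "m > 0"
    "g [^]\<^bsub>GLC\<^esub> m = \<one>\<^bsub>GLC\<^esub>"
  have "Sqmat g ^ (p ^ CARD('n)) = 1" "Sqmat g ^ (q ^ CARD('n)) = 1"
    using P.congruence_closure_torsion[of g m] Q.congruence_closure_torsion[of g m] g by simp_all
  moreover have "coprime (p ^ CARD('n)) (q ^ CARD('n))"
    using P.prime_p Q.prime_p \<open>p \<noteq> q\<close> by (simp add: primes_coprime)
  ultimately have "Sqmat g = 1" by (rule power_eq_one_coprime)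
  then have "Sqmat g = Sqmat (mat 1)" by (simp add: Sqmat_one[symmetric])
  then show "g = \<one>\<^bsub>GLC\<^esub>" by (simp add: Sqmat_inject)
qed

lemma finite_rcosets_Int_congruence_closures:
  fixes Lambda Gamma :: "((complex, 'n::{finite,linorder}) vec, 'n) vec set"
  assumes P: "integral_matrix_group R p Lambda Gamma"
    and Q: "integral_matrix_group R' q Lambda Gamma"
  shows "finite (rcosets\<^bsub>GLC\<lparr>carrier := Lambda\<rparr>\<^esub>
    (integral_matrix_group.congruence_closure R p Lambda Gamma \<inter>
     integral_matrix_group.congruence_closure R' q Lambda Gamma))"
proof -
  interpret P: integral_matrix_group R p Lambda Gamma by (rule P)
  interpret Q: integral_matrix_group R' q Lambda Gamma by (rule Q)
  obtain keyP :: "((complex, 'n) vec, 'n) vec \<Rightarrow> 'n sqmat set" where keyP: "finite (keyP ` Lambda)"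
    "\<And>a b. a \<in> Lambda \<Longrightarrow> b \<in> Lambda \<Longrightarrow> keyP a = keyP b \<Longrightarrow> a \<otimes>\<^bsub>GLC\<^esub> inv\<^bsub>GLC\<^esub> b \<in> P.congruence_closure"
    using P.congruence_closure_classifier by blast
  obtain keyQ :: "((complex, 'n) vec, 'n) vec \<Rightarrow> 'n sqmat set" where keyQ: "finite (keyQ ` Lambda)"
    "\<And>a b. a \<in> Lambda \<Longrightarrow> b \<in> Lambda \<Longrightarrow> keyQ a = keyQ b \<Longrightarrow> a \<otimes>\<^bsub>GLC\<^esub> inv\<^bsub>GLC\<^esub> b \<in> Q.congruence_closure"
    using Q.congruence_closure_classifier by blast
  show ?thesis
  proof (rule group.finite_rcosets_by_classifier[where f = "\<lambda>g. (keyP g, keyQ g)"])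
    show "group (GLC\<lparr>carrier := Lambda\<rparr>)"
      by (rule subgroup.subgroup_is_group[OF P.subgroup_Lambda group_GLC])
    have "subgroup (P.congruence_closure \<inter> Q.congruence_closure) GLC"
      by (rule group.subgroups_Inter_pair[OF group_GLC P.subgroup_congruence_closure Q.subgroup_congruence_closure])
    moreover have "P.congruence_closure \<inter> Q.congruence_closure \<subseteq> Lambda"
      by (auto simp: P.congruence_closure_def)
    ultimately show "subgroup (P.congruence_closure \<inter> Q.congruence_closure) (GLC\<lparr>carrier := Lambda\<rparr>)"
      using group.subgroup_incl[OF group_GLC _ P.subgroup_Lambda] by blast
    have "(\<lambda>g. (keyP g, keyQ g)) ` Lambda \<subseteq> keyP ` Lambda \<times> keyQ ` Lambda" by blast
    then show "finite ((\<lambda>g. (keyP g, keyQ g)) ` carrier (GLC\<lparr>carrier := Lambda\<rparr>))"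
      using keyP(1) keyQ(1) by (simp add: finite_subset)
  next
    fix a b
    assume "a \<in> carrier (GLC\<lparr>carrier := Lambda\<rparr>)" "b \<in> carrier (GLC\<lparr>carrier := Lambda\<rparr>)"
      and "(keyP a, keyQ a) = (keyP b, keyQ b)"
    then show "a \<otimes>\<^bsub>GLC\<lparr>carrier := Lambda\<rparr>\<^esub> inv\<^bsub>GLC\<lparr>carrier := Lambda\<rparr>\<^esub> b
        \<in> P.congruence_closure \<inter> Q.congruence_closure"
      using keyP(2) keyQ(2) group.m_inv_consistent[OF group_GLC P.subgroup_Lambda] by simp
  qed
qed

theorem mainTheorem18:
  fixes K :: "complex set"
    and Lambda Gamma :: "((complex, 'n::{finite,linorder}) vec, 'n) vec set"
  assumes "number_field K"
    and "subgroup Lambda GLC"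
    and "\<forall>A\<in>Lambda. entries_in K A"
    and "\<exists>S. finite S \<and> S \<subseteq> carrier GLC \<and> Lambda = generate GLC S"
    and "unipotent_subgroup Gamma"
    and "Gamma \<subseteq> Lambda"
  shows "\<exists>Lambda0. subgroup Lambda0 GLC \<and> Lambda0 \<subseteq> Lambda \<and>
           finite (rcosets\<^bsub>GLC\<lparr>carrier := Lambda\<rparr>\<^esub> Lambda0) \<and>
           torsion_free Lambda0 \<and> Gamma \<subseteq> Lambda0"
proof -
  obtain S where S: "finite S" "S \<subseteq> carrier GLC" "Lambda = generate GLC S"
    using assms(4) by blast
  obtain N where N: "\<And>p. prime p \<Longrightarrow> N < p \<Longrightarrow> \<exists>R. integral_matrix_group R p Lambda Gamma"
    using integral_matrix_group_for_large_primes[OF assms(1-3) S assms(5,6)] by blast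
  obtain p :: nat where p: "prime p" "N < p" using bigger_prime by blast
  obtain q :: nat where q: "prime q" "p < q" using bigger_prime by blast
  obtain R R' where P: "integral_matrix_group R p Lambda Gamma"
    and Q: "integral_matrix_group R' q Lambda Gamma"
    using N[OF p] N[OF q(1) less_trans[OF p(2) q(2)]] by blast
  interpret P: integral_matrix_group R p Lambda Gamma by (rule P)
  interpret Q: integral_matrix_group R' q Lambda Gamma by (rule Q)
  have "subgroup (P.congruence_closure \<inter> Q.congruence_closure) GLC"
    by (rule group.subgroups_Inter_pair[OF group_GLC P.subgroup_congruence_closure Q.subgroup_congruence_closure])
  moreover have "P.congruence_closure \<inter> Q.congruence_closure \<subseteq> Lambda"
    by (auto simp: P.congruence_closure_def)
  moreover have "Gamma \<subseteq> P.congruence_closure \<inter> Q.congruence_closure"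
    using P.Gamma_subset_congruence_closure Q.Gamma_subset_congruence_closure by blast
  ultimately show ?thesis
    using finite_rcosets_Int_congruence_closures[OF P Q]
      torsion_free_Int_congruence_closures[OF P Q less_imp_neq[OF q(2)]] by blast
qed

end
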